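(* Let $K\ge 2$, let $\Delta^K\subset\mathbb{R}^K$ be the probability simplex, and identify outcomes $Y$ with one-hot vectors in $\mathbb{R}^K$. Let $\mu_t\in\Delta^K$, $\mu_t^*\in\Delta^K$, $c_t\in\mathbb{R}_+^K$ with $\mu_t+c_t\in[0,1]^K$ and $\mu_t-c_t\in[0,1]^K$. Let $a_t$ be an action and $l_t$ a loss; write $l\in\mathbb{R}^K$ for the vector $l_i=l_t(a_t,Y=i)$. Define $$L_t^{\max}=\max_{\tilde\mu\in\Delta^K,\ \tilde\mu\in[\mu_t-c_t,\mu_t+c_t]}\mathbb{E}_{Y\sim\tilde\mu}[l_t(a_t,Y)],\qquad L_t^*=\mathbb{E}_{Y\sim\mu_t^*}[l_t(a_t,Y)],$$ (where $\tilde\mu\in[\mu_t-c_t,\mu_t+c_t]$ is coordinatewise), and for $g_t\in\mathbb{R}^K$, $$L_t^{\mathrm{pay}}=L_t^*+\mathbb{E}_{Y\sim\mu_t^*}\big[\langle g_t,\mu_t-Y\rangle+\langle|g_t|,c_t\rangle\big],$$ with $|g_t|$ taken coordinatewise. Let $\gamma^*\in\mathbb{R}$ attain $\inf_{\gamma\in\mathbb{R}}\langle c_t,|l-\gamma\mathbf{1}|\rangle$. If $g_t=l-\gamma^*\mathbf{1}$, then $L_t^{\mathrm{pay}}=L_t^{\max}$.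
   Context: $\mathbf{1}$ denotes the all-ones vector in $\mathbb{R}^K$ and $|v|$ for a vector $v$ denotes the coordinatewise absolute value. *)

theory Defs
  imports "HOL-Analysis.Analysis"
begin

definition prob_simplex :: "(real ^ 'k::finite) set" where
  "prob_simplex = {x. (\<forall>i. 0 \<le> x $ i) \<and> (\<Sum>i\<in>UNIV. x $ i) = 1}"

definition onehot :: "'k::finite \<Rightarrow> real ^ 'k" where
  "onehot i = axis i 1"

definition expect :: "real ^ 'k::finite \<Rightarrow> ('k \<Rightarrow> real) \<Rightarrow> real" where
  "expect mu f = (\<Sum>i\<in>UNIV. mu $ i * f i)"

definition vabs :: "real ^ 'k::finite \<Rightarrow> real ^ 'k" where
  "vabs v = (\<chi> i. \<bar>v $ i\<bar>)"

definition L_max :: "real ^ 'k::finite \<Rightarrow> real ^ 'k \<Rightarrow> ('k \<Rightarrow> real) \<Rightarrow> real" where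
  "L_max mu c loss = Sup {expect mt loss | mt. mt \<in> prob_simplex \<and>
      (\<forall>i. mu $ i - c $ i \<le> mt $ i \<and> mt $ i \<le> mu $ i + c $ i)}"

definition L_star :: "real ^ 'k::finite \<Rightarrow> ('k \<Rightarrow> real) \<Rightarrow> real" where
  "L_star mustar loss = expect mustar loss"

definition L_pay :: "real ^ 'k::finite \<Rightarrow> real ^ 'k \<Rightarrow> real ^ 'k \<Rightarrow> real ^ 'k
     \<Rightarrow> ('k \<Rightarrow> real) \<Rightarrow> real" where
  "L_pay mu mustar c g loss = L_star mustar loss +
     expect mustar (\<lambda>y. g \<bullet> (mu - onehot y) + vabs g \<bullet> c)"

end

theory Submission
  imports Defs
begin

text \<open>
Write \<open>l\<close> for the loss vector and \<open>F \<gamma> = \<langle>c, |l - \<gamma> 1|\<rangle>\<close>. Since \<open>\<mu>\<^sub>t\<close> and \<open>\<mu>\<^sub>t\<^sup>*\<close> both sum to one,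
the shift by \<open>\<gamma>\<close> cancels and \<open>L\<^sup>p\<^sup>a\<^sup>y = E\<^sub>\<mu>[l] + F \<gamma>\<close> for every \<open>\<gamma>\<close>.
On the other side, any admissible \<open>\<mu>' = \<mu> + d\<close> has \<open>\<Sum> d = 0\<close> and \<open>|d| \<le> c\<close>, so
\<open>E\<^sub>\<mu>\<^sub>'[l] - E\<^sub>\<mu>[l] = \<langle>d, l - \<gamma> 1\<rangle> \<le> F \<gamma>\<close> for every \<open>\<gamma>\<close> (weak duality).
At a minimiser \<open>\<gamma>\<^sup>*\<close> the one-sided derivatives of the piecewise linear \<open>F\<close> show that the
mass \<open>\<Sum> c\<^sub>i sgn (l\<^sub>i - \<gamma>\<^sup>*)\<close> is balanced by the mass on the ties \<open>l\<^sub>i = \<gamma>\<^sup>*\<close>; this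
lets one choose \<open>d\<^sub>i = c\<^sub>i sgn (l\<^sub>i - \<gamma>\<^sup>*)\<close> off the ties and a common fraction of \<open>-c\<^sub>i\<close> on
them, which attains the bound, so \<open>L\<^sup>m\<^sup>a\<^sup>x = E\<^sub>\<mu>[l] + F \<gamma>\<^sup>*\<close> as well.
\<close>

definition abs_dev :: "real ^ 'k::finite \<Rightarrow> ('k \<Rightarrow> real) \<Rightarrow> real \<Rightarrow> real" where
  "abs_dev c loss \<gamma> = (\<Sum>i\<in>UNIV. c $ i * \<bar>loss i - \<gamma>\<bar>)"

definition box_simplex :: "real ^ 'k::finite \<Rightarrow> real ^ 'k \<Rightarrow> (real ^ 'k) set" where
  "box_simplex mu c = {m \<in> prob_simplex. \<forall>i. mu $ i - c $ i \<le> m $ i \<and> m $ i \<le> mu $ i + c $ i}"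

lemma inner_vabs_eq_abs_dev:
  "c \<bullet> vabs ((\<chi> i. loss i) - \<gamma> *\<^sub>R 1) = abs_dev c loss \<gamma>"
  by (simp add: abs_dev_def inner_vec_def vabs_def)

lemma L_max_eq_Sup_box_simplex:
  "L_max mu c loss = Sup ((\<lambda>m. expect m loss) ` box_simplex mu c)"
  unfolding L_max_def box_simplex_def by (rule arg_cong[where f = Sup]) auto

lemma prob_simplex_sum: "mu \<in> prob_simplex \<Longrightarrow> (\<Sum>i\<in>UNIV. mu $ i) = 1"
  by (simp add: prob_simplex_def)

lemma expect_add_zero_sum:
  assumes "(\<Sum>i\<in>UNIV. d $ i) = 0"
  shows "expect (mu + d) loss = expect mu loss + (\<Sum>i\<in>UNIV. d $ i * (loss i - \<gamma>))"
proof -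
  have "(\<Sum>i\<in>UNIV. d $ i * (loss i - \<gamma>)) = (\<Sum>i\<in>UNIV. d $ i * loss i)"
    using assms by (simp add: right_diff_distrib sum_subtractf flip: sum_distrib_right)
  then show ?thesis
    by (simp add: expect_def distrib_right sum.distrib)
qed

lemma expect_affine:
  assumes "mu \<in> prob_simplex"
  shows "expect mu (\<lambda>y. a * h y + b) = a * expect mu h + b"
proof -
  have "expect mu (\<lambda>y. a * h y + b) = a * expect mu h + b * (\<Sum>i\<in>UNIV. mu $ i)"
    by (simp add: expect_def algebra_simps sum.distrib sum_distrib_left sum_distrib_right)
  then show ?thesis
    using prob_simplex_sum[OF assms] by simp
qed

lemma L_pay_centered:
  assumes "mu \<in> prob_simplex" and "mustar \<in> prob_simplex"
  shows "L_pay mu mustar c ((\<chi> i. loss i) - \<gamma> *\<^sub>R 1) loss = expect mu loss + abs_dev c loss \<gamma>"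
proof -
  let ?g = "(\<chi> i. loss i) - \<gamma> *\<^sub>R 1"
  have "?g \<bullet> mu = expect mu (\<lambda>y. 1 * loss y + - \<gamma>)"
    by (simp add: inner_vec_def expect_def mult.commute)
  then have g_mu: "?g \<bullet> mu = expect mu loss - \<gamma>"
    using expect_affine[OF assms(1), of 1 loss "- \<gamma>"] by simp
  have "(\<lambda>y. ?g \<bullet> (mu - onehot y) + vabs ?g \<bullet> c)
      = (\<lambda>y. - 1 * loss y + (?g \<bullet> mu + vabs ?g \<bullet> c + \<gamma>))"
    by (simp add: onehot_def inner_axis algebra_simps)
  then have "expect mustar (\<lambda>y. ?g \<bullet> (mu - onehot y) + vabs ?g \<bullet> c)
      = - expect mustar loss + (?g \<bullet> mu + vabs ?g \<bullet> c + \<gamma>)"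
    by (simp only: expect_affine[OF assms(2)])
  moreover have "vabs ?g \<bullet> c = abs_dev c loss \<gamma>"
    by (simp add: abs_dev_def inner_vec_def vabs_def mult.commute)
  ultimately show ?thesis
    by (simp add: L_pay_def L_star_def g_mu)
qed

lemma expect_le_abs_dev:
  assumes "m \<in> box_simplex mu c" and "mu \<in> prob_simplex"
  shows "expect m loss \<le> expect mu loss + abs_dev c loss \<gamma>"
proof -
  have m: "m \<in> prob_simplex" "\<And>i. mu $ i - c $ i \<le> m $ i \<and> m $ i \<le> mu $ i + c $ i"
    using assms(1) by (auto simp: box_simplex_def)
  have dev: "\<bar>m $ i - mu $ i\<bar> \<le> c $ i" for i
    using m(2)[of i] by (auto simp: abs_le_iff)
  have "(\<Sum>i\<in>UNIV. (m - mu) $ i) = 0"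
    using prob_simplex_sum[OF m(1)] prob_simplex_sum[OF assms(2)] by (simp add: sum_subtractf)
  then have "expect m loss = expect mu loss + (\<Sum>i\<in>UNIV. (m - mu) $ i * (loss i - \<gamma>))"
    using expect_add_zero_sum[of "m - mu" mu loss \<gamma>] by simp
  also have "(\<Sum>i\<in>UNIV. (m - mu) $ i * (loss i - \<gamma>)) \<le> abs_dev c loss \<gamma>"
    unfolding abs_dev_def
  proof (rule sum_mono)
    fix i
    have "(m - mu) $ i * (loss i - \<gamma>) \<le> \<bar>m $ i - mu $ i\<bar> * \<bar>loss i - \<gamma>\<bar>"
      by (metis abs_ge_self abs_mult vector_minus_component)
    also have "\<dots> \<le> c $ i * \<bar>loss i - \<gamma>\<bar>"
      using dev by (rule mult_right_mono) simp
    finally show "(m - mu) $ i * (loss i - \<gamma>) \<le> c $ i * \<bar>loss i - \<gamma>\<bar>" .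
  qed
  finally show ?thesis by simp
qed

lemma abs_diff_small_shift:
  fixes x t :: real
  assumes "x \<noteq> 0 \<Longrightarrow> \<bar>t\<bar> \<le> \<bar>x\<bar>"
  shows "\<bar>x - t\<bar> = \<bar>x\<bar> - sgn x * t + (if x = 0 then \<bar>t\<bar> else 0)"
  using assms by (cases x "0::real" rule: linorder_cases) auto

text \<open>For \<open>\<epsilon>\<close> below every nonzero gap \<open>|loss i - \<gamma>|\<close>, \<open>abs_dev c loss\<close> is affine on
\<open>[\<gamma>, \<gamma> + \<epsilon>]\<close> and on \<open>[\<gamma> - \<epsilon>, \<gamma>]\<close>, so minimality at \<open>\<gamma>\<close> bounds both one-sided slopes.\<close>

lemma abs_dev_minimiser_balanced:
  assumes min: "\<And>\<gamma>'. abs_dev c loss \<gamma> \<le> abs_dev c loss \<gamma>'"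
  shows "\<bar>\<Sum>i\<in>UNIV. c $ i * sgn (loss i - \<gamma>)\<bar> \<le> (\<Sum>i | loss i = \<gamma>. c $ i)"
proof -
  let ?s = "\<Sum>i\<in>UNIV. c $ i * sgn (loss i - \<gamma>)"
  let ?E = "\<Sum>i | loss i = \<gamma>. c $ i"
  obtain \<epsilon> where \<epsilon>: "\<epsilon> > 0" "\<And>i. loss i \<noteq> \<gamma> \<Longrightarrow> \<epsilon> \<le> \<bar>loss i - \<gamma>\<bar>"
  proof
    let ?D = "insert 1 ((\<lambda>i. \<bar>loss i - \<gamma>\<bar>) ` {i. loss i \<noteq> \<gamma>})"
    show "Min ?D > 0" by (subst Min_gr_iff) auto
    show "Min ?D \<le> \<bar>loss i - \<gamma>\<bar>" if "loss i \<noteq> \<gamma>" for i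
      using that by (intro Min_le) auto
  qed
  have shift: "abs_dev c loss (\<gamma> + t) = abs_dev c loss \<gamma> - t * ?s + \<bar>t\<bar> * ?E"
    if "\<bar>t\<bar> \<le> \<epsilon>" for t
  proof -
    have "c $ i * \<bar>loss i - (\<gamma> + t)\<bar>
        = c $ i * \<bar>loss i - \<gamma>\<bar> - t * (c $ i * sgn (loss i - \<gamma>))
          + \<bar>t\<bar> * (if loss i = \<gamma> then c $ i else 0)" for i
    proof -
      have "\<bar>loss i - \<gamma> - t\<bar>
          = \<bar>loss i - \<gamma>\<bar> - sgn (loss i - \<gamma>) * t + (if loss i - \<gamma> = 0 then \<bar>t\<bar> else 0)"
        using \<epsilon>(2)[of i] that by (intro abs_diff_small_shift) auto
      then have "c $ i * \<bar>loss i - (\<gamma> + t)\<bar>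
          = c $ i * (\<bar>loss i - \<gamma>\<bar> - sgn (loss i - \<gamma>) * t + (if loss i = \<gamma> then \<bar>t\<bar> else 0))"
        by (simp add: diff_diff_eq)
      then show ?thesis
        by (simp add: algebra_simps)
    qed
    then show ?thesis
      unfolding abs_dev_def by (simp only: sum.distrib sum_subtractf flip: sum_distrib_left)
       (simp add: sum.If_cases)
  qed
  have "\<epsilon> * ?s \<le> \<epsilon> * ?E" and "\<epsilon> * - ?s \<le> \<epsilon> * ?E"
    using min[of "\<gamma> + \<epsilon>"] min[of "\<gamma> + - \<epsilon>"] shift[of \<epsilon>] shift[of "- \<epsilon>"] \<epsilon>(1) by auto
  then show ?thesis
    using \<epsilon>(1) by (simp only: mult_le_cancel_left_pos abs_le_iff)
qed

text \<open>Off the ties \<open>d\<close> saturates the box in the direction of \<open>loss - \<gamma>\<close>; on the ties it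
spreads the compensating mass \<open>-s\<close>, \<open>s = \<Sum>\<^sub>i c\<^sub>i sgn (loss i - \<gamma>)\<close>, proportionally to \<open>c\<close>
(when there is no tie mass, \<open>s = 0\<close> and division by zero harmlessly gives \<open>r = 0\<close>).\<close>

lemma balanced_direction_attains_abs_dev:
  fixes c :: "real ^ 'k::finite"
  assumes c_nonneg: "\<And>i. 0 \<le> c $ i"
    and balanced: "\<bar>\<Sum>i\<in>UNIV. c $ i * sgn (loss i - \<gamma>)\<bar> \<le> (\<Sum>i | loss i = \<gamma>. c $ i)"
  obtains d :: "real ^ 'k" where "(\<Sum>i\<in>UNIV. d $ i) = 0" and "\<And>i. \<bar>d $ i\<bar> \<le> c $ i"
    and "(\<Sum>i\<in>UNIV. d $ i * (loss i - \<gamma>)) = abs_dev c loss \<gamma>"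
proof
  let ?s = "\<Sum>i\<in>UNIV. c $ i * sgn (loss i - \<gamma>)"
  let ?E = "\<Sum>i | loss i = \<gamma>. c $ i"
  define r where "r = ?s / ?E"
  define d :: "real ^ 'k" where
    "d = (\<chi> i. c $ i * sgn (loss i - \<gamma>) - (if loss i = \<gamma> then c $ i * r else 0))"
  have "0 \<le> ?E"
    using c_nonneg by (simp add: sum_nonneg)
  then have "\<bar>r\<bar> \<le> 1"
    using balanced by (cases "?E = 0") (simp_all add: r_def divide_le_eq_1)
  then have tie: "\<bar>c $ i * r\<bar> \<le> c $ i" for i
    using c_nonneg[of i] by (simp add: abs_mult mult_left_le)
  show "\<bar>d $ i\<bar> \<le> c $ i" for i
  proof (cases "loss i = \<gamma>")
    case True
    then show ?thesis using tie[of i] by (simp add: d_def)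
  next
    case False
    then show ?thesis using c_nonneg[of i] by (simp add: d_def abs_mult)
  qed
  have "?s = ?E * r"
    using balanced by (cases "?E = 0") (simp_all add: r_def)
  then show "(\<Sum>i\<in>UNIV. d $ i) = 0"
    by (simp add: d_def sum_subtractf sum.If_cases flip: sum_distrib_right)
  show "(\<Sum>i\<in>UNIV. d $ i * (loss i - \<gamma>)) = abs_dev c loss \<gamma>"
    unfolding abs_dev_def d_def by (rule sum.cong) (auto simp: sgn_if)
qed

lemma L_max_eq_abs_dev_minimum:
  fixes mu c :: "real ^ 'k::finite"
  assumes mu: "mu \<in> prob_simplex" and c_nonneg: "\<And>i. 0 \<le> c $ i"
    and lower: "\<And>i. 0 \<le> mu $ i - c $ i"
    and min: "\<And>\<gamma>'. abs_dev c loss \<gamma> \<le> abs_dev c loss \<gamma>'"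
  shows "L_max mu c loss = expect mu loss + abs_dev c loss \<gamma>"
proof -
  obtain d :: "real ^ 'k" where d: "(\<Sum>i\<in>UNIV. d $ i) = 0" "\<And>i. \<bar>d $ i\<bar> \<le> c $ i"
    and attains: "(\<Sum>i\<in>UNIV. d $ i * (loss i - \<gamma>)) = abs_dev c loss \<gamma>"
    using balanced_direction_attains_abs_dev[OF c_nonneg abs_dev_minimiser_balanced[OF min]] by blast
  have "mu + d \<in> box_simplex mu c"
  proof -
    have "mu $ i - c $ i \<le> (mu + d) $ i \<and> (mu + d) $ i \<le> mu $ i + c $ i" for i
      using d(2)[of i] by (auto simp: abs_le_iff)
    moreover have "0 \<le> (mu + d) $ i" for i
      using d(2)[of i] lower[of i] by (auto simp: abs_le_iff)
    ultimately show ?thesis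
      using prob_simplex_sum[OF mu] d(1) by (simp add: box_simplex_def prob_simplex_def sum.distrib)
  qed
  moreover have "expect (mu + d) loss = expect mu loss + abs_dev c loss \<gamma>"
    using expect_add_zero_sum[OF d(1), of mu loss \<gamma>] attains by simp
  ultimately show ?thesis
    unfolding L_max_eq_Sup_box_simplex using expect_le_abs_dev[OF _ mu]
    by (intro cSup_eq_maximum) (auto intro: image_eqI[of _ _ "mu + d"])
qed

theorem proposition3:
  fixes mu mustar c g :: "real ^ 'k::finite"
    and lt :: "'a \<Rightarrow> 'k \<Rightarrow> real" and a :: 'a
    and gamma :: real
  assumes "CARD('k) \<ge> 2"
    and "mu \<in> prob_simplex" and "mustar \<in> prob_simplex"
    and "\<forall>i. 0 \<le> c $ i"
    and "\<forall>i. 0 \<le> mu $ i + c $ i \<and> mu $ i + c $ i \<le> 1"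
    and "\<forall>i. 0 \<le> mu $ i - c $ i \<and> mu $ i - c $ i \<le> 1"
    and "\<forall>gam. c \<bullet> vabs ((\<chi> i. lt a i) - gamma *\<^sub>R 1)
                 \<le> c \<bullet> vabs ((\<chi> i. lt a i) - gam *\<^sub>R 1)"
    and "g = (\<chi> i. lt a i) - gamma *\<^sub>R 1"
  shows "L_pay mu mustar c g (lt a) = L_max mu c (lt a)"
proof -
  have "abs_dev c (lt a) gamma \<le> abs_dev c (lt a) gam" for gam
    using assms(7) by (simp only: inner_vabs_eq_abs_dev)
  then have "L_max mu c (lt a) = expect mu (lt a) + abs_dev c (lt a) gamma"
    using assms(2,4,6) by (intro L_max_eq_abs_dev_minimum) auto
  moreover have "L_pay mu mustar c g (lt a) = expect mu (lt a) + abs_dev c (lt a) gamma"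
    unfolding assms(8) using assms(2,3) by (rule L_pay_centered)
  ultimately show ?thesis by simp
qed

end
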